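(* Let $\{|0\rangle,|1\rangle,|2\rangle\}$ be the computational basis of $\mathbb{C}^3$, $P_k=|k\rangle\langle k|$, and define on $\mathbb{C}^3\otimes\mathbb{C}^3$: $Q=I\otimes I-\sum_{k=0}^{2}P_k\otimes P_k-P_2\otimes P_0$, $|\Psi\rangle=\frac{1}{\sqrt3}(|00\rangle+|11\rangle+|22\rangle)$, $\rho_{ent}=\frac38|\Psi\rangle\langle\Psi|+\frac18 Q$, $|\Phi_a\rangle=|2\rangle\otimes\big(\sqrt{\tfrac{1+a}{2}}|0\rangle+\sqrt{\tfrac{1-a}{2}}|2\rangle\big)$ and $\rho_a=\frac{8a}{8a+1}\rho_{ent}+\frac{1}{8a+1}|\Phi_a\rangle\langle\Phi_a|$. Then for every $0<a<1$, $$d_{\max}(\rho_a)=\frac{2\sqrt2\,a}{8a+1},$$ and this value is attained, for example, by any diagonal unitary $U^B\in\mathbb{C}^{3\times3}$ with $U^B_{0,0}=-U^B_{1,1}=U^B_{2,2}$.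
   Context: For a state $\rho$ on $\mathbb{C}^M\otimes\mathbb{C}^N$ let $\rho_B=\mathrm{Tr}_A(\rho)$. A unitary $U^B$ on $\mathbb{C}^N$ is called cyclic for $\rho$ if $[\rho_B,U^B]=0$. Set $\rho_f=(I\otimes U^B)\rho(I\otimes U^{B\dagger})$ and define the Fu distance $d(\rho,U^B)=\frac{1}{\sqrt2}\|\rho-\rho_f\|_F$ (Frobenius norm $\|X\|_F=\sqrt{\mathrm{Tr}(X^\dagger X)}$). Define $d_{\max}(\rho)=\max\{d(\rho,U^B): U^B\text{ unitary},\ [\rho_B,U^B]=0\}$. *)

theory Defs
  imports "HOL-Analysis.Analysis"
begin

text \<open>Matrices on C^M (x) C^N are indexed by pairs (i,j): the basis vector |i>|j>.
  Operators are complex^('m::finite \<times> 'n::finite)^('m::finite \<times> 'n::finite).\<close>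

definition cadj :: "complex^'n::finite^'m::finite \<Rightarrow> complex^'m::finite^'n::finite" where
  "cadj A = (\<chi> i j. cnj (A $ j $ i))"

definition unitary :: "complex^'n::finite^'n \<Rightarrow> bool" where
  "unitary U \<longleftrightarrow> U ** cadj U = mat 1 \<and> cadj U ** U = mat 1"

definition ptraceA :: "complex^('m::finite \<times> 'n::finite)^('m::finite \<times> 'n::finite) \<Rightarrow> complex^'n::finite^'n" where
  "ptraceA \<rho> = (\<chi> j j'. \<Sum>i\<in>UNIV. \<rho> $ (i, j) $ (i, j'))"

definition idtensor :: "complex^'n::finite^'n \<Rightarrow> complex^('m::finite \<times> 'n::finite)^('m::finite \<times> 'n::finite)" where
  "idtensor U = (\<chi> p q. if fst p = fst q then U $ snd p $ snd q else 0)"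

definition frob :: "complex^'n::finite^'m::finite \<Rightarrow> real" where
  "frob X = sqrt (\<Sum>i\<in>UNIV. \<Sum>j\<in>UNIV. (cmod (X $ i $ j))\<^sup>2)"

definition cyclic :: "complex^('m::finite \<times> 'n::finite)^('m::finite \<times> 'n::finite) \<Rightarrow> complex^'n::finite^'n \<Rightarrow> bool" where
  "cyclic \<rho> U \<longleftrightarrow> unitary U \<and> ptraceA \<rho> ** U = U ** ptraceA \<rho>"

definition rho_f :: "complex^('m::finite \<times> 'n::finite)^('m::finite \<times> 'n::finite) \<Rightarrow> complex^'n::finite^'n \<Rightarrow> complex^('m::finite \<times> 'n::finite)^('m::finite \<times> 'n::finite)" where
  "rho_f \<rho> U = idtensor U ** \<rho> ** cadj (idtensor U)"

definition fu_dist :: "complex^('m::finite \<times> 'n::finite)^('m::finite \<times> 'n::finite) \<Rightarrow> complex^'n::finite^'n \<Rightarrow> real" where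
  "fu_dist \<rho> U = frob (\<rho> - rho_f \<rho> U) / sqrt 2"

definition dmax :: "complex^('m::finite \<times> 'n::finite)^('m::finite \<times> 'n::finite) \<Rightarrow> real" where
  "dmax \<rho> = Sup {fu_dist \<rho> U | U. cyclic \<rho> U}"

definition proj :: "3 \<Rightarrow> complex^3^3" where
  "proj k = (\<chi> i j. if i = k \<and> j = k then 1 else 0)"

definition tensor :: "complex^'m::finite^'m \<Rightarrow> complex^'n::finite^'n \<Rightarrow> complex^('m::finite \<times> 'n::finite)^('m::finite \<times> 'n::finite)" where
  "tensor A B = (\<chi> p q. A $ fst p $ fst q * B $ snd p $ snd q)"

definition outer :: "complex^'n::finite \<Rightarrow> complex^'n::finite^'n" where
  "outer v = (\<chi> i j. v $ i * cnj (v $ j))"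

definition Qop :: "complex^(3 \<times> 3)^(3 \<times> 3)" where
  "Qop = mat 1 - (\<Sum>k\<in>UNIV. tensor (proj k) (proj k)) - tensor (proj 2) (proj 0)"

definition Psi :: "complex^(3 \<times> 3)" where
  "Psi = (\<chi> p. if fst p = snd p then complex_of_real (1 / sqrt 3) else 0)"

definition rho_ent :: "complex^(3 \<times> 3)^(3 \<times> 3)" where
  "rho_ent = (3/8) *\<^sub>R outer Psi + (1/8) *\<^sub>R Qop"

definition Phi :: "real \<Rightarrow> complex^(3 \<times> 3)" where
  "Phi a = (\<chi> p. if fst p = 2 then
      (if snd p = 0 then complex_of_real (sqrt ((1 + a) / 2))
       else if snd p = 2 then complex_of_real (sqrt ((1 - a) / 2)) else 0)
     else 0)"

definition rho_a :: "real \<Rightarrow> complex^(3 \<times> 3)^(3 \<times> 3)" where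
  "rho_a a = (8 * a / (8 * a + 1)) *\<^sub>R rho_ent + (1 / (8 * a + 1)) *\<^sub>R outer (Phi a)"

end

theory Submission
  imports Defs
begin

text \<open>For \<open>0 < a < 1\<close> the reduced state \<open>\<rho>\<^sub>B\<close> of \<open>\<rho>\<^sub>a\<close> has the form
  \<open>[[p,0,q],[0,r,0],[q,0,p]]\<close> with \<open>q \<noteq> 0\<close> and \<open>r \<noteq> p \<plusminus> q\<close>, so every unitary commuting with it
  has the form \<open>[[u,0,v],[0,z,0],[v,0,u]]\<close>. For such \<open>U\<close> a direct computation gives
  \<open>d(\<rho>\<^sub>a, U) = a/(8a+1) \<cdot> sqrt (6 - 4 Re (u z\<^sup>*) - 2|u|\<^sup>2)\<close>. As \<open>|z| = 1\<close>, the radicand is at most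
  \<open>8 - 2(|u| - 1)\<^sup>2 \<le> 8\<close>, with equality for \<open>z = -u\<close>, \<open>|u| = 1\<close>.\<close>

lemma UNIV_3': "(UNIV :: 3 set) = {0, 1, 2}"
  unfolding UNIV_3 by auto

lemma exhaust_3': "(i :: 3) = 0 \<or> i = 1 \<or> i = 2"
  using UNIV_3' by blast

lemma forall_3': "(\<forall>i::3. P i) \<longleftrightarrow> P 0 \<and> P 1 \<and> P 2"
  by (simp add: UNIV_3' flip: ball_UNIV)

lemma sum_3': "sum f (UNIV :: 3 set) = f 0 + f 1 + f 2"
  unfolding UNIV_3' by (simp add: add.assoc)

lemma matrix_mult_3_entry:
  "((A :: 'a::semiring_1^3^3) ** B) $ i $ k = A$i$0 * B$0$k + A$i$1 * B$1$k + A$i$2 * B$2$k"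
  by (simp add: matrix_matrix_mult_def sum_3')

lemma sum_UNIV_prod:
  "sum f (UNIV :: ('a::finite \<times> 'b::finite) set) = (\<Sum>i\<in>UNIV. \<Sum>j\<in>UNIV. f (i, j))"
  by (simp add: sum.cartesian_product flip: UNIV_Times_UNIV)

lemma cadj_idtensor:
  "cadj (idtensor U :: complex^('m::finite \<times> 'n::finite)^('m \<times> 'n)) = idtensor (cadj U)"
  by (simp add: cadj_def idtensor_def vec_eq_iff)

lemma idtensor_mult_entry:
  "(idtensor U ** X) $ (i, j) $ q = (\<Sum>k\<in>UNIV. U $ j $ k * X $ (i, k) $ q)"
  unfolding matrix_matrix_mult_def sum_UNIV_prod
  by (subst sum.swap) (simp add: idtensor_def if_distrib[where f="\<lambda>x. x * _"] cong: if_cong)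

lemma mult_idtensor_entry:
  "(X ** idtensor U) $ p $ (i, j) = (\<Sum>k\<in>UNIV. X $ p $ (i, k) * U $ k $ j)"
  by (simp add: matrix_matrix_mult_def idtensor_def sum_UNIV_prod if_distrib sum.If_cases)

lemma rho_f_entry:
  "rho_f \<rho> U $ (i, j) $ (i', j')
    = (\<Sum>k\<in>UNIV. \<Sum>k'\<in>UNIV. U $ j $ k * \<rho> $ (i, k) $ (i', k') * cnj (U $ j' $ k'))"
  unfolding rho_f_def cadj_idtensor
  by (simp add: mult_idtensor_entry idtensor_mult_entry cadj_def sum_distrib_right) (rule sum.swap)

lemma of_real_frob_squared:
  "complex_of_real ((frob X)\<^sup>2) = (\<Sum>i\<in>UNIV. \<Sum>j\<in>UNIV. X $ i $ j * cnj (X $ i $ j))"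
  unfolding frob_def by (simp add: sum_nonneg complex_norm_square del: of_real_power)

lemma cmod_eq_1_iff: "cmod z = 1 \<longleftrightarrow> z * cnj z = 1"
proof -
  have "z * cnj z = of_real ((cmod z)\<^sup>2)"
    by (rule complex_norm_square[symmetric])
  then show ?thesis
    by (simp add: abs_square_eq_1 del: of_real_power)
qed

lemma unitary_row_inner:
  assumes "unitary U"
  shows "(\<Sum>k\<in>UNIV. U $ i $ k * cnj (U $ j $ k)) = (if i = j then 1 else 0)"
proof -
  have "(U ** cadj U) $ i $ j = mat 1 $ i $ j"
    using assms unfolding unitary_def by simp
  then show ?thesis
    by (simp add: matrix_matrix_mult_def cadj_def mat_def)
qed

definition cross_shaped :: "'a::zero^3^3 \<Rightarrow> bool" where
  "cross_shaped U \<longleftrightarrow> U$0$1 = 0 \<and> U$1$0 = 0 \<and> U$1$2 = 0 \<and> U$2$1 = 0 \<and> U$2$0 = U$0$2 \<and> U$2$2 = U$0$0"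

text \<open>The hypotheses say that \<open>r = B$1$1\<close> is not an eigenvalue \<open>p \<plusminus> q\<close> of the outer block.\<close>

lemma commute_cross_shaped:
  fixes B U :: "'a::idom^3^3"
  assumes B: "cross_shaped B" and "B$0$2 \<noteq> 0" and "(B$0$0 - B$1$1)\<^sup>2 \<noteq> (B$0$2)\<^sup>2"
    and comm: "B ** U = U ** B"
  shows "cross_shaped U"
proof -
  obtain p q r where B_eqs: "B$0$0 = p" "B$2$2 = p" "B$0$2 = q" "B$2$0 = q" "B$1$1 = r"
    "B$0$1 = 0" "B$1$0 = 0" "B$1$2 = 0" "B$2$1 = 0"
    using B unfolding cross_shaped_def by auto
  have "q \<noteq> 0" and det: "(p - r)\<^sup>2 - q\<^sup>2 \<noteq> 0"
    using assms(2,3) B_eqs by auto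
  have e: "(B ** U) $ i $ k = (U ** B) $ i $ k" for i k
    using comm by simp
  have "((p - r)\<^sup>2 - q\<^sup>2) * U$0$1 = 0" "((p - r)\<^sup>2 - q\<^sup>2) * U$2$1 = 0"
    using e[of 0 1, unfolded matrix_mult_3_entry B_eqs] e[of 2 1, unfolded matrix_mult_3_entry B_eqs]
    by algebra+
  moreover have "((p - r)\<^sup>2 - q\<^sup>2) * U$1$0 = 0" "((p - r)\<^sup>2 - q\<^sup>2) * U$1$2 = 0"
    using e[of 1 0, unfolded matrix_mult_3_entry B_eqs] e[of 1 2, unfolded matrix_mult_3_entry B_eqs]
    by algebra+
  moreover have "q * (U$2$0 - U$0$2) = 0" "q * (U$2$2 - U$0$0) = 0"
    using e[of 0 0, unfolded matrix_mult_3_entry B_eqs] e[of 0 2, unfolded matrix_mult_3_entry B_eqs]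
    by algebra+
  ultimately show ?thesis
    using \<open>q \<noteq> 0\<close> det unfolding cross_shaped_def by auto
qed

lemma diagonal_commute_cross_shaped:
  fixes B U :: "'a::comm_semiring_1^3^3"
  assumes "cross_shaped B" and "\<forall>i j. i \<noteq> j \<longrightarrow> U$i$j = 0" and "U$2$2 = U$0$0"
  shows "B ** U = U ** B"
  using assms unfolding cross_shaped_def
  by (simp add: vec_eq_iff forall_3' matrix_mult_3_entry mult.commute)

lemma outer_Psi_entry: "outer Psi $ (i, j) $ (i', j') = (if i = j \<and> i' = j' then 1/3 else 0)"
proof -
  have "complex_of_real (1 / sqrt 3) * complex_of_real (1 / sqrt 3) = 1/3"
    by (simp flip: of_real_mult)
  then show ?thesis
    by (simp add: outer_def Psi_def)
qed

lemma Qop_entry: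
  "Qop $ (i, j) $ (i', j') = (if i = i' \<and> j = j' \<and> i \<noteq> j \<and> (i, j) \<noteq> (2, 0) then 1 else 0)"
  unfolding Qop_def using exhaust_3'[of i'] exhaust_3'[of j']
  by (simp add: sum_3' mat_def tensor_def proj_def) blast

lemma rho_a_entry:
  "rho_a a $ (i, j) $ (i', j') = complex_of_real (1 / (8*a + 1)) *
     (of_real a * (if i = j \<and> i' = j' then 1 else 0)
      + of_real a * (if i = i' \<and> j = j' \<and> i \<noteq> j \<and> (i, j) \<noteq> (2, 0) then 1 else 0)
      + Phi a $ (i, j) * cnj (Phi a $ (i', j')))"
proof -
  have "rho_a a = (1 / (8*a + 1)) *\<^sub>R ((8*a) *\<^sub>R rho_ent + outer (Phi a))"
    unfolding rho_a_def by (simp add: scaleR_add_right)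
  then show ?thesis
    unfolding rho_ent_def
    by (simp add: outer_def[of "Phi a"] outer_Psi_entry Qop_entry)
      (simp add: scaleR_conv_of_real algebra_simps add_divide_distrib)
qed

lemma Phi_entries:
  "Phi a $ (0, j) = 0" "Phi a $ (1, j) = 0" "Phi a $ (2, 1) = 0"
  "Phi a $ (2, 0) = of_real (sqrt ((1 + a) / 2))" "Phi a $ (2, 2) = of_real (sqrt ((1 - a) / 2))"
  unfolding Phi_def by simp_all

lemma ptraceA_rho_a:
  assumes "0 < a" and "a < 1"
  defines "B \<equiv> ptraceA (rho_a a)"
  shows "cross_shaped B" and "B$0$2 \<noteq> 0" and "(B$0$0 - B$1$1)\<^sup>2 \<noteq> (B$0$2)\<^sup>2"
proof -
  define w \<alpha> \<beta> where "w = 1 / (8*a + 1)" and "\<alpha> = sqrt ((1 + a) / 2)" and "\<beta> = sqrt ((1 - a) / 2)"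
  have "w > 0" "\<alpha> > 0" "\<beta> > 0" and \<alpha>\<beta>: "\<alpha>\<^sup>2 = a + \<beta>\<^sup>2"
    using assms(1,2) by (simp_all add: w_def \<alpha>_def \<beta>_def field_simps)
  have B_eqs: "B$0$0 = of_real (w * (2*a + \<alpha>\<^sup>2))" "B$2$2 = of_real (w * (3*a + \<beta>\<^sup>2))"
    "B$1$1 = of_real (w * (3*a))" "B$0$2 = of_real (w * \<alpha> * \<beta>)" "B$2$0 = of_real (w * \<alpha> * \<beta>)"
    "B$0$1 = 0" "B$1$0 = 0" "B$1$2 = 0" "B$2$1 = 0"
    unfolding B_def ptraceA_def
    by (simp_all add: sum_3' rho_a_entry Phi_entries flip: w_def \<alpha>_def \<beta>_def)
      (simp_all add: algebra_simps power2_eq_square)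
  show "cross_shaped B"
    unfolding cross_shaped_def B_eqs \<alpha>\<beta> by (simp add: algebra_simps)
  show "B$0$2 \<noteq> 0"
    unfolding B_eqs using \<open>w > 0\<close> \<open>\<alpha> > 0\<close> \<open>\<beta> > 0\<close> by simp
  have "(w * (2*a + \<alpha>\<^sup>2) - w * (3*a))\<^sup>2 - (w * \<alpha> * \<beta>)\<^sup>2 = - (w * \<beta>)\<^sup>2 * a"
    using \<alpha>\<beta> by algebra
  then have "(w * (2*a + \<alpha>\<^sup>2) - w * (3*a))\<^sup>2 \<noteq> (w * \<alpha> * \<beta>)\<^sup>2"
    using \<open>w > 0\<close> \<open>\<beta> > 0\<close> assms(1) by auto
  then show "(B$0$0 - B$1$1)\<^sup>2 \<noteq> (B$0$2)\<^sup>2"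
    unfolding B_eqs by (metis of_real_diff of_real_power of_real_eq_iff)
qed

lemma frob_squared_rho_a_conj_diff:
  fixes U :: "complex^3^3"
  assumes "\<bar>a\<bar> \<le> 1" and "unitary U" and "cross_shaped U"
  shows "(frob (rho_a a - rho_f (rho_a a) U))\<^sup>2
    = (a / (8*a + 1))\<^sup>2 * (12 - 8 * Re (U$0$0 * cnj (U$1$1)) - 4 * (cmod (U$0$0))\<^sup>2)"
proof -
  define w \<alpha> \<beta> where "w = 1 / (8*a + 1)" and "\<alpha> = sqrt ((1 + a) / 2)" and "\<beta> = sqrt ((1 - a) / 2)"
  have "\<alpha>\<^sup>2 = a + \<beta>\<^sup>2"
    using assms(1) by (simp add: \<alpha>_def \<beta>_def field_simps)
  then have \<alpha>\<beta>: "(complex_of_real \<alpha>)\<^sup>2 = of_real a + (of_real \<beta>)\<^sup>2"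
    by (metis of_real_add of_real_power)
  have shape: "U$0$1 = 0" "U$1$0 = 0" "U$1$2 = 0" "U$2$1 = 0" "U$2$0 = U$0$2" "U$2$2 = U$0$0"
    using assms(3) unfolding cross_shaped_def by auto
  note rows = unitary_row_inner[OF assms(2), unfolded sum_3']
  have r1: "U$0$0 * cnj (U$0$0) + U$0$2 * cnj (U$0$2) = 1"
    using rows[of 0 0] shape by simp
  have r2: "U$0$0 * cnj (U$0$2) + U$0$2 * cnj (U$0$0) = 0"
    using rows[of 0 2] shape by simp
  have r3: "U$1$1 * cnj (U$1$1) = 1"
    using rows[of 1 1] shape by simp
  have "complex_of_real ((frob (rho_a a - rho_f (rho_a a) U))\<^sup>2)
      = (of_real w)\<^sup>2 * (of_real a)\<^sup>2
        * (12 - 4 * (U$0$0 * cnj (U$1$1) + cnj (U$0$0) * U$1$1) - 4 * (U$0$0 * cnj (U$0$0)))"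
    unfolding of_real_frob_squared using r1 r2 r3 \<alpha>\<beta>
    by (simp only: sum_UNIV_prod sum_3' vector_minus_component rho_f_entry
        rho_a_entry[of a, folded w_def] shape,
      simp add: Phi_entries[of a, folded \<alpha>_def \<beta>_def],
      algebra)
  also have "\<dots> = of_real ((w * a)\<^sup>2 * (12 - 8 * Re (U$0$0 * cnj (U$1$1)) - 4 * (cmod (U$0$0))\<^sup>2))"
  proof -
    have "U$0$0 * cnj (U$1$1) + cnj (U$0$0) * U$1$1 = of_real (2 * Re (U$0$0 * cnj (U$1$1)))"
      using complex_add_cnj[of "U$0$0 * cnj (U$1$1)"] by (simp add: mult.commute)
    moreover have "U$0$0 * cnj (U$0$0) = of_real ((cmod (U$0$0))\<^sup>2)"
      by (rule complex_norm_square[symmetric])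
    ultimately show ?thesis
      by (simp add: power_mult_distrib)
  qed
  finally have "(frob (rho_a a - rho_f (rho_a a) U))\<^sup>2
      = (w * a)\<^sup>2 * (12 - 8 * Re (U$0$0 * cnj (U$1$1)) - 4 * (cmod (U$0$0))\<^sup>2)"
    by (simp only: of_real_eq_iff)
  then show ?thesis
    by (simp add: w_def)
qed

lemma fu_dist_rho_a:
  fixes U :: "complex^3^3"
  assumes "0 \<le> a" and "a \<le> 1" and "unitary U" and "cross_shaped U"
  shows "fu_dist (rho_a a) U
    = a / (8*a + 1) * sqrt (6 - 4 * Re (U$0$0 * cnj (U$1$1)) - 2 * (cmod (U$0$0))\<^sup>2)"
proof -
  let ?D = "rho_a a - rho_f (rho_a a) U"
  have "frob ?D \<ge> 0"
    unfolding frob_def by (simp add: sum_nonneg)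
  then have "fu_dist (rho_a a) U = sqrt ((frob ?D)\<^sup>2 / 2)"
    unfolding fu_dist_def by (simp add: real_sqrt_divide)
  also have "\<dots> = sqrt ((a / (8*a + 1))\<^sup>2 * (6 - 4 * Re (U$0$0 * cnj (U$1$1)) - 2 * (cmod (U$0$0))\<^sup>2))"
    using assms by (simp add: frob_squared_rho_a_conj_diff)
  also have "\<dots> = a / (8*a + 1) * sqrt (6 - 4 * Re (U$0$0 * cnj (U$1$1)) - 2 * (cmod (U$0$0))\<^sup>2)"
    using assms(1) by (simp add: real_sqrt_mult)
  finally show ?thesis .
qed

lemma Re_mult_cnj_unit_bound:
  assumes "cmod z = 1"
  shows "6 - 4 * Re (u * cnj z) - 2 * (cmod u)\<^sup>2 \<le> 8"
proof -
  have "- Re (u * cnj z) \<le> cmod u"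
    using abs_Re_le_cmod[of "u * cnj z"] assms by (simp add: norm_mult)
  then show ?thesis
    using zero_le_power2[of "cmod u - 1"] by (simp add: power2_diff)
qed

lemma sqrt_8: "sqrt 8 = 2 * sqrt 2"
  using real_sqrt_mult[of 4 2] by simp

lemma cyclic_rho_a_imp_cross_shaped:
  assumes "0 < a" and "a < 1" and "cyclic (rho_a a) U"
  shows "cross_shaped U"
  using commute_cross_shaped[OF ptraceA_rho_a[OF assms(1,2)]] assms(3)
  unfolding cyclic_def by simp

lemma fu_dist_rho_a_le:
  assumes "0 < a" and "a < 1" and "cyclic (rho_a a) U"
  shows "fu_dist (rho_a a) U \<le> 2 * sqrt 2 * a / (8*a + 1)"
proof -
  have U: "unitary U" "cross_shaped U"
    using assms cyclic_rho_a_imp_cross_shaped unfolding cyclic_def by auto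
  have "U$1$1 * cnj (U$1$1) = 1"
    using unitary_row_inner[OF U(1), of 1 1] U(2) by (simp add: sum_3' cross_shaped_def)
  then have "cmod (U$1$1) = 1"
    by (simp only: cmod_eq_1_iff)
  then have "sqrt (6 - 4 * Re (U$0$0 * cnj (U$1$1)) - 2 * (cmod (U$0$0))\<^sup>2) \<le> sqrt 8"
    by (rule real_sqrt_le_mono[OF Re_mult_cnj_unit_bound])
  moreover have "a / (8*a + 1) \<ge> 0"
    using assms(1) by simp
  ultimately have "fu_dist (rho_a a) U \<le> a / (8*a + 1) * sqrt 8"
    unfolding fu_dist_rho_a[OF less_imp_le less_imp_le U, OF assms(1,2)] by (rule mult_left_mono)
  also have "\<dots> = 2 * sqrt 2 * a / (8*a + 1)"
    by (simp add: sqrt_8)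
  finally show ?thesis .
qed

lemma fu_dist_rho_a_diagonal:
  fixes U :: "complex^3^3"
  assumes "0 < a" and "a < 1" and "unitary U" and diag: "\<forall>i j. i \<noteq> j \<longrightarrow> U$i$j = 0"
    and "U$0$0 = - U$1$1" and "U$0$0 = U$2$2"
  shows "cyclic (rho_a a) U \<and> fu_dist (rho_a a) U = 2 * sqrt 2 * a / (8*a + 1)"
proof
  have "ptraceA (rho_a a) ** U = U ** ptraceA (rho_a a)"
    using diagonal_commute_cross_shaped[OF ptraceA_rho_a(1)[OF assms(1,2)] diag] assms(6) by simp
  then show "cyclic (rho_a a) U"
    unfolding cyclic_def using assms(3) by simp
  have "cross_shaped U"
    using diag assms(6) unfolding cross_shaped_def by auto
  have u: "U$0$0 * cnj (U$0$0) = 1"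
    using unitary_row_inner[OF assms(3), of 0 0] diag by (simp add: sum_3')
  then have "cmod (U$0$0) = 1"
    by (simp only: cmod_eq_1_iff)
  moreover have "U$0$0 * cnj (U$1$1) = -1"
    using u assms(5) by simp
  ultimately have "6 - 4 * Re (U$0$0 * cnj (U$1$1)) - 2 * (cmod (U$0$0))\<^sup>2 = 8"
    by simp
  then have "fu_dist (rho_a a) U = a / (8*a + 1) * sqrt 8"
    using fu_dist_rho_a[OF less_imp_le less_imp_le assms(3) \<open>cross_shaped U\<close>, OF assms(1,2)] by simp
  also have "\<dots> = 2 * sqrt 2 * a / (8*a + 1)"
    by (simp add: sqrt_8)
  finally show "fu_dist (rho_a a) U = 2 * sqrt 2 * a / (8*a + 1)" .
qed

theorem theorem5:
  fixes a :: real
  assumes "0 < a" and "a < 1"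
  shows "dmax (rho_a a) = 2 * sqrt 2 * a / (8 * a + 1)
    \<and> (\<forall>U :: complex^3^3. unitary U \<and> (\<forall>i j. i \<noteq> j \<longrightarrow> U $ i $ j = 0)
          \<and> U $ 0 $ 0 = - U $ 1 $ 1 \<and> U $ 0 $ 0 = U $ 2 $ 2
        \<longrightarrow> cyclic (rho_a a) U \<and> fu_dist (rho_a a) U = 2 * sqrt 2 * a / (8 * a + 1))"
    (is "_ = ?d \<and> ?attained")
proof
  show ?attained
    by (intro allI impI, elim conjE) (rule fu_dist_rho_a_diagonal[OF assms])
  define U\<^sub>0 :: "complex^3^3" where "U\<^sub>0 = (\<chi> i j. if i = j then if i = 1 then -1 else 1 else 0)"
  have "unitary U\<^sub>0"
    unfolding unitary_def U\<^sub>0_def by (simp add: vec_eq_iff forall_3' matrix_mult_3_entry cadj_def mat_def)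
  then have U\<^sub>0: "cyclic (rho_a a) U\<^sub>0 \<and> fu_dist (rho_a a) U\<^sub>0 = ?d"
    by (rule fu_dist_rho_a_diagonal[OF assms]) (simp_all add: U\<^sub>0_def)
  let ?S = "{fu_dist (rho_a a) U |U. cyclic (rho_a a) U}"
  show "dmax (rho_a a) = ?d"
    unfolding dmax_def
  proof (rule cSup_eq_maximum)
    show "?d \<in> ?S"
      using U\<^sub>0 by (auto intro!: exI[where x = U\<^sub>0])
    show "x \<le> ?d" if "x \<in> ?S" for x
      using that fu_dist_rho_a_le[OF assms] by blast
  qed
qed

end
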